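(* Let $\chi$ be a real measurable function on $[0,\infty)$ with $\chi(t)=1$ for $0\le t\le1$ and $0\le\chi(t)\le1$ for $t>1$, satisfying either (i) $\int_T^\infty\chi(t)\,dt=0$ for some constant $T$, where $T=\min\{t:\int_t^\infty\chi(s)\,ds=0\}$ and $T>1$, or (ii) $\chi(t)=\left(\frac{1+o(1)}{h(t)}\right)^t$ as $t\to\infty$ with $h$ non-decreasing and $h(t)\to\infty$. Let $\xi(u)$ be the unique real solution of $u=\int_1^\infty\chi(v)e^{\xi(u)v}\,dv$, and let $\sigma$ be the solution of $u\sigma(u)=\int_0^u\sigma(u-t)\chi(t)\,dt$ for $u>1$ with $\sigma(u)=1$ for $0\le u\le1$. If $\xi(u)=o(\log u)$ as $u\to\infty$, then $$\int_1^\infty\frac{\chi(v)e^{\xi(u)v}}{v}\,dv=o(u)\quad\text{and hence}\quad \sigma(u)=\exp\big((-\xi(u)+o(1))u\big)\quad\text{as } u\to\infty.$$ *)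

theory Defs
  imports "HOL-Analysis.Analysis" "HOL-Library.Landau_Symbols"
begin

text \<open>Tail integral of chi over [t, infinity), as an extended nonnegative real
  (chi is nonnegative on [1,infinity), so this is the natural meaning of the
  possibly infinite integral).\<close>
definition tail_nn :: "(real \<Rightarrow> real) \<Rightarrow> real \<Rightarrow> ennreal" where
  "tail_nn chi t = (\<integral>\<^sup>+ s. ennreal (chi s) * indicator {t..} s \<partial>lborel)"

definition cond_i :: "(real \<Rightarrow> real) \<Rightarrow> bool" where
  "cond_i chi \<longleftrightarrow> (\<exists>T. T > 1 \<and> tail_nn chi T = 0 \<and>
      (\<forall>t. 0 \<le> t \<and> t < T \<longrightarrow> tail_nn chi t \<noteq> 0))"

definition cond_ii :: "(real \<Rightarrow> real) \<Rightarrow> bool" where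
  "cond_ii chi \<longleftrightarrow> (\<exists>h e :: real \<Rightarrow> real. mono_on {0..} h \<and> filterlim h at_top at_top \<and>
      (e \<longlongrightarrow> 0) at_top \<and>
      (\<forall>\<^sub>F t in at_top. chi t = ((1 + e t) / h t) powr t))"

end

theory Submission
  imports Defs "HOL-Real_Asymp.Real_Asymp"
begin

text \<open>
  Write \<open>tilted s t = chi t * exp (s * t)\<close> and \<open>mgf s\<close> for its integral over \<open>[0, \<infinity>)\<close>;
  by definition the tilt at \<open>\<xi> u\<close> has mass \<open>u\<close> on \<open>[1, \<infinity>)\<close>. Splitting the integral of
  \<open>tilted (\<xi> u) t / t\<close> at a large \<open>V\<close> bounds it by \<open>V exp (\<bar>\<xi> u\<bar> V) + u / V\<close>, and
  \<open>\<xi> u = o(ln u)\<close> makes the first term \<open>O(V sqrt u)\<close>: this is the first claim.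

  Lower bound: if \<open>2 w\<close> is at most the integral of \<open>tilted s\<close> over \<open>[0, w]\<close> for
  \<open>1 < w \<le> u\<close>, then \<open>exp (- s w) \<le> \<sigma> w\<close> on \<open>[0, u]\<close>, because the renewal equation
  rules out a first point where this fails. Under (ii) the rate \<open>ln (chi t) / t\<close> is almost
  non-increasing, so for \<open>s = \<xi> u + \<epsilon>\<close> either the tilt is already large on \<open>[w - 1, w]\<close>,
  or the tilt at \<open>\<xi> u\<close> has a tail \<open>O(1/\<epsilon>)\<close> beyond \<open>w\<close>; then most of its mass \<open>u\<close> lies
  in \<open>[A, w]\<close>, where the extra factor \<open>exp (\<epsilon> t)\<close> gains a factor 4.

  Upper bound: \<open>\<sigma> \<le> 1\<close>, and the renewal equation turns a bound on \<open>\<sigma> y exp (s' y)\<close> into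
  one on \<open>\<sigma> y exp (s y)\<close> for \<open>s > s'\<close>, at the cost of the factor
  \<open>mgf s' exp ((s - s') (2 mgf s + 1))\<close>. Iterating along the grid \<open>s = j \<delta>\<close> up to \<open>\<xi> u\<close>
  and summing the \<open>mgf (j \<delta>)\<close> as a geometric series gives
  \<open>ln (\<sigma> u) + u \<xi> u \<le> 3 \<delta> u + o(u)\<close>.

  Hypothesis (i) confines the integral defining \<open>\<xi> u\<close> to \<open>[1, T]\<close>, which forces
  \<open>u \<le> (T - 1) exp (T \<bar>\<xi> u\<bar>)\<close> and contradicts \<open>\<xi> u = o(ln u)\<close>.
\<close>

lemma has_integral_reflect_shift_real:
  fixes f :: "real \<Rightarrow> real"
  shows "((\<lambda>t. f (c - t)) has_integral I) {a..b} \<longleftrightarrow> (f has_integral I) {c - b..c - a}"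
proof -
  have "((\<lambda>t. f (c - t)) has_integral I) {a..b} \<longleftrightarrow>
      ((\<lambda>x. (f \<circ> (+) c) (- x)) has_integral I) {- (- a)..- (- b)}"
    by (simp add: o_def)
  also have "\<dots> \<longleftrightarrow> ((f \<circ> (+) c) has_integral I) {- b..- a}"
    by (rule has_integral_reflect_real)
  also have "\<dots> \<longleftrightarrow> (f has_integral I) {- b + c..- a + c}"
    by (rule has_integral_shift_Icc_real)
  finally show ?thesis
    by (simp add: algebra_simps)
qed

lemma integrable_reflect_shift_real:
  fixes f :: "real \<Rightarrow> real"
  shows "(\<lambda>t. f (c - t)) integrable_on {a..b} \<longleftrightarrow> f integrable_on {c - b..c - a}"
  unfolding integrable_on_def using has_integral_reflect_shift_real by blast

lemma integral_reflect_shift_real: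
  fixes f :: "real \<Rightarrow> real"
  shows "integral {a..b} (\<lambda>t. f (c - t)) = integral {c - b..c - a} f"
  by (metis has_integral_reflect_shift_real integrable_integral integrable_reflect_shift_real
      integral_unique not_integrable_integral)

lemma integral_le_except_point:
  fixes f g :: "real \<Rightarrow> real"
  assumes "f integrable_on S" "g integrable_on S" "\<And>t. t \<in> S \<Longrightarrow> t \<noteq> c \<Longrightarrow> f t \<le> g t"
  shows "integral S f \<le> integral S g"
proof -
  define g' where "g' t = (if t = c then f t else g t)" for t
  have "(g' has_integral integral S g) S"
    by (rule has_integral_spike_finite[of "{c}"]) (use assms(2) in \<open>auto simp: g'_def\<close>)
  with assms(1) show ?thesis
    by (rule has_integral_le[OF integrable_integral]) (use assms(3) in \<open>auto simp: g'_def\<close>)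
qed

lemma has_integral_combine_Icc_Ici:
  fixes f :: "real \<Rightarrow> real"
  assumes "a \<le> b" "f integrable_on {a..b}" "f integrable_on {b..}"
  shows "(f has_integral (integral {a..b} f + integral {b..} f)) {a..}"
proof -
  have "(f has_integral (integral {a..b} f + integral {b..} f)) ({a..b} \<union> {b..})"
    by (rule has_integral_Un) (use assms in \<open>auto intro: negligible_subset[of "{b}"]\<close>)
  moreover have "{a..b} \<union> {b..} = {a..}"
    using assms(1) by auto
  ultimately show ?thesis
    by simp
qed

lemma integrable_if_le_exp_minus:
  fixes f :: "real \<Rightarrow> real"
  assumes S: "S \<subseteq> {0..}" "S \<in> sets lebesgue" and f: "f \<in> borel_measurable (lebesgue_on S)"
    and le: "\<And>t. t \<in> S \<Longrightarrow> \<bar>f t\<bar> \<le> C * exp (- t)"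
  shows "f integrable_on S"
proof -
  have "(\<lambda>t::real. exp (- 1 * t)) integrable_on {0..}"
    by (rule integrable_on_exp_minus_to_infinity) simp
  then have "(\<lambda>t::real. exp (- t)) absolutely_integrable_on S"
    using S by (intro set_integrable_subset[OF nonnegative_absolutely_integrable_1]) auto
  then have "(\<lambda>t::real. exp (- t)) integrable_on S"
    by (rule set_lebesgue_integral_eq_integral(1))
  from integrable_on_cmult_left[OF this, of C] have "(\<lambda>t. C * exp (- t)) integrable_on S"
    by simp
  then show ?thesis
    by (rule measurable_bounded_by_integrable_imp_integrable_real[OF f _ le S(2)])
qed

lemma sum_exp_grid_le:
  fixes \<delta> t :: real
  assumes "0 < \<delta>" "0 < t"
  shows "\<delta> * (\<Sum>j<N. exp (real (Suc j) * \<delta> * t)) \<le> exp (real N * \<delta> * t) * (1 / t + \<delta>)"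
proof -
  define a where "a = exp (\<delta> * t)"
  have a: "1 + \<delta> * t \<le> a"
    unfolding a_def by (rule exp_ge_add_one_self)
  then have a1: "0 < a - 1"
    using assms by (smt (verit) mult_pos_pos)
  have pow: "exp (real k * \<delta> * t) = a ^ k" for k
    by (simp add: a_def flip: exp_of_nat_mult)
  have "(\<Sum>j<N. exp (real (Suc j) * \<delta> * t)) = a * ((a ^ N - 1) / (a - 1))"
    unfolding pow using a1 by (simp add: geometric_sum flip: sum_distrib_left)
  also have "\<dots> \<le> a ^ N * (a / (a - 1))"
    using a1 by (simp add: field_simps)
  finally have "\<delta> * (\<Sum>j<N. exp (real (Suc j) * \<delta> * t)) \<le> \<delta> * (a ^ N * (a / (a - 1)))"
    using assms(1) by (rule mult_left_mono[OF _ less_imp_le])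
  also have "\<dots> = a ^ N * (\<delta> * (a / (a - 1)))"
    by (rule mult.left_commute)
  also have "\<dots> \<le> a ^ N * (1 / t + \<delta>)"
  proof (rule mult_left_mono)
    have "\<delta> / (a - 1) \<le> 1 / t"
      using a a1 assms by (simp add: divide_simps mult.commute)
    then show "\<delta> * (a / (a - 1)) \<le> 1 / t + \<delta>"
      using a1 by (simp add: field_simps)
  qed (use a1 in simp)
  finally show ?thesis
    by (simp add: pow)
qed

lemma smallo_ln_imp_exp_le_sqrt:
  fixes f :: "real \<Rightarrow> real"
  assumes "f \<in> o(\<lambda>u. ln u)" "0 < A"
  shows "\<forall>\<^sub>F u in at_top. exp (\<bar>f u\<bar> * A) \<le> sqrt u"
proof -
  have "\<forall>\<^sub>F u in at_top. norm (f u) \<le> 1 / (2 * A) * norm (ln u)"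
    by (rule landau_o.smallD[OF assms(1)]) (use assms(2) in simp)
  then show ?thesis
  proof (rule eventually_rev_mp[OF _ eventually_mono[OF eventually_ge_at_top[of 1]]], intro impI)
    fix u :: real
    assume "1 \<le> u" "norm (f u) \<le> 1 / (2 * A) * norm (ln u)"
    then have "\<bar>f u\<bar> * A \<le> ln (sqrt u)"
      using assms(2) by (simp add: ln_sqrt field_simps)
    then show "exp (\<bar>f u\<bar> * A) \<le> sqrt u"
      using \<open>1 \<le> u\<close> by (metis exp_le_cancel_iff exp_ln real_sqrt_gt_0_iff less_le_trans zero_less_one)
  qed
qed

section \<open>The kernel and its exponential tilts\<close>

text \<open>The decay assumption, a consequence of (ii), makes every tilt integrable.\<close>

locale kernel =
  fixes chi :: "real \<Rightarrow> real"
  assumes chi_measurable: "set_borel_measurable lborel {0..} chi"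
    and chi_eq_1: "\<And>t. 0 \<le> t \<Longrightarrow> t \<le> 1 \<Longrightarrow> chi t = 1"
    and chi_bounds: "\<And>t. 1 < t \<Longrightarrow> 0 \<le> chi t \<and> chi t \<le> 1"
    and chi_superexp_decay: "\<And>K. \<forall>\<^sub>F t in at_top. chi t \<le> exp (- K * t)"
begin

definition tilted :: "real \<Rightarrow> real \<Rightarrow> real" where
  "tilted s t = chi t * exp (s * t)"

definition mgf :: "real \<Rightarrow> real" where
  "mgf s = integral {0..} (tilted s)"

definition mgf1 :: "real \<Rightarrow> real" where
  "mgf1 s = integral {1..} (tilted s)"

lemma chi_nonneg: "0 \<le> t \<Longrightarrow> 0 \<le> chi t"
  using chi_eq_1 chi_bounds by (cases "t \<le> 1") auto

lemma chi_le_1: "0 \<le> t \<Longrightarrow> chi t \<le> 1"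
  using chi_eq_1 chi_bounds by (cases "t \<le> 1") auto

lemma tilted_nonneg: "0 \<le> t \<Longrightarrow> 0 \<le> tilted s t"
  by (simp add: tilted_def chi_nonneg)

lemma tilted_le_exp: "0 \<le> t \<Longrightarrow> tilted s t \<le> exp (s * t)"
  using chi_le_1[of t] by (simp add: tilted_def mult_left_le_one_le)

lemma tilted_mono: "s \<le> s' \<Longrightarrow> 0 \<le> t \<Longrightarrow> tilted s t \<le> tilted s' t"
  unfolding tilted_def by (intro mult_left_mono) (auto intro: mult_right_mono chi_nonneg)

lemma tilted_add: "tilted (s + r) t = exp (r * t) * tilted s t"
  by (simp add: tilted_def algebra_simps flip: exp_add)

lemma chi_mult_measurable:
  assumes "S \<subseteq> {0..}" "S \<in> sets lebesgue" "continuous_on S g"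
  shows "(\<lambda>t. chi t * g t) \<in> borel_measurable (lebesgue_on S)"
proof -
  have "(\<lambda>t. indicator {0..} t *\<^sub>R chi t) \<in> borel_measurable lebesgue"
    using chi_measurable unfolding set_borel_measurable_def by (simp add: measurable_completion)
  then have "(\<lambda>t. indicator {0..} t *\<^sub>R chi t * g t) \<in> borel_measurable (lebesgue_on S)"
    using assms(2,3)
    by (intro borel_measurable_times measurable_restrict_space1 continuous_imp_measurable_on_sets_lebesgue)
  then show ?thesis
    by (rule measurable_cong[THEN iffD1, rotated])
      (use assms(1) in \<open>auto simp: space_restrict_space indicator_def\<close>)
qed

lemma tilted_le_exp_minus: "\<exists>C. \<forall>t\<ge>0. tilted s t \<le> C * exp (- t)"
proof -
  obtain t0 where t0: "\<And>t. t0 \<le> t \<Longrightarrow> chi t \<le> exp (- (\<bar>s\<bar> + 1) * t)"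
    using chi_superexp_decay[of "\<bar>s\<bar> + 1"] unfolding eventually_at_top_linorder by blast
  define C where "C = exp ((\<bar>s\<bar> + 1) * \<bar>t0\<bar>)"
  have "tilted s t \<le> C * exp (- t)" if t: "0 \<le> t" for t
  proof (cases "t \<le> \<bar>t0\<bar>")
    case True
    have "s * t \<le> \<bar>s\<bar> * \<bar>t0\<bar>"
      using True t by (meson abs_ge_self abs_ge_zero mult_mono order_trans)
    then have "s * t \<le> (\<bar>s\<bar> + 1) * \<bar>t0\<bar> + - t"
      using True by (simp add: distrib_right)
    then have "tilted s t \<le> exp ((\<bar>s\<bar> + 1) * \<bar>t0\<bar> + - t)"
      using tilted_le_exp[OF t] by (meson exp_le_cancel_iff order_trans)
    then show ?thesis
      by (simp add: C_def flip: exp_add)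
  next
    case False
    have "tilted s t \<le> exp (- (\<bar>s\<bar> + 1) * t) * exp (s * t)"
      unfolding tilted_def using t0[of t] False by (intro mult_right_mono) auto
    also have "\<dots> = exp (- t + (s - \<bar>s\<bar>) * t)"
      by (simp add: algebra_simps flip: exp_add)
    also have "\<dots> \<le> exp (- t)"
      using t by (simp add: mult_nonpos_nonneg)
    also have "\<dots> \<le> C * exp (- t)"
      by (simp add: C_def)
    finally show ?thesis .
  qed
  then show ?thesis
    by blast
qed

lemma tilted_integrable:
  assumes "S \<subseteq> {0..}" "S \<in> sets lebesgue"
  shows "tilted s integrable_on S"
proof -
  obtain C where C: "\<And>t. 0 \<le> t \<Longrightarrow> tilted s t \<le> C * exp (- t)"
    using tilted_le_exp_minus by blast
  have "tilted s \<in> borel_measurable (lebesgue_on S)"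
    unfolding tilted_def[abs_def] using assms by (intro chi_mult_measurable continuous_intros)
  then show ?thesis
    by (rule integrable_if_le_exp_minus[OF assms])
      (use assms(1) C tilted_nonneg in \<open>force\<close>)
qed

lemma tilted_integrable_Ici: "0 \<le> a \<Longrightarrow> tilted s integrable_on {a..}"
  by (rule tilted_integrable) auto

lemma tilted_integrable_Icc: "0 \<le> a \<Longrightarrow> tilted s integrable_on {a..b}"
  by (rule tilted_integrable) auto

lemma tilted_div_integrable:
  assumes "S \<subseteq> {1..}" "S \<in> sets lebesgue"
  shows "(\<lambda>t. tilted s t / t) integrable_on S"
proof -
  have S: "S \<subseteq> {0..}"
    using assms(1) by auto
  obtain C where C: "\<And>t. 0 \<le> t \<Longrightarrow> tilted s t \<le> C * exp (- t)"
    using tilted_le_exp_minus by blast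
  have "(\<lambda>t. chi t * (exp (s * t) / t)) \<in> borel_measurable (lebesgue_on S)"
    using assms by (intro chi_mult_measurable S continuous_intros) auto
  then have "(\<lambda>t. tilted s t / t) \<in> borel_measurable (lebesgue_on S)"
    by (simp add: tilted_def)
  moreover have "\<bar>tilted s t / t\<bar> \<le> C * exp (- t)" if "t \<in> S" for t
  proof -
    have t: "1 \<le> t"
      using assms(1) that by auto
    then have "\<bar>tilted s t / t\<bar> \<le> tilted s t"
      using tilted_nonneg[of t s] by (simp add: divide_le_eq mult_le_cancel_left1)
    with C[of t] t show ?thesis
      by simp
  qed
  ultimately show ?thesis
    by (rule integrable_if_le_exp_minus[OF S assms(2)])
qed

lemma mgf_split: "mgf s = integral {0..1} (tilted s) + mgf1 s"
  unfolding mgf_def mgf1_def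
  by (rule integral_unique[OF has_integral_combine_Icc_Ici])
    (auto intro: tilted_integrable_Icc tilted_integrable_Ici)

lemma mgf1_nonneg: "0 \<le> mgf1 s"
  unfolding mgf1_def by (rule integral_nonneg) (auto intro: tilted_integrable_Ici tilted_nonneg)

lemma mgf_ge_1:
  assumes "0 \<le> s"
  shows "1 \<le> mgf s"
proof -
  have "integral {0..1} (\<lambda>t::real. 1) \<le> integral {0..1} (tilted s)"
    by (rule integral_le) (use assms chi_eq_1 in \<open>auto simp: tilted_def intro: tilted_integrable_Icc\<close>)
  then show ?thesis
    using mgf1_nonneg[of s] by (simp add: mgf_split)
qed

lemma mgf_mono: "s \<le> s' \<Longrightarrow> mgf s \<le> mgf s'"
  unfolding mgf_def by (intro integral_le tilted_integrable_Ici tilted_mono) auto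

lemma mgf1_mono: "s \<le> s' \<Longrightarrow> mgf1 s \<le> mgf1 s'"
  unfolding mgf1_def by (intro integral_le tilted_integrable_Ici tilted_mono) auto

lemma integral_tilted_le_mgf: "0 \<le> a \<Longrightarrow> integral {a..b} (tilted s) \<le> mgf s"
  unfolding mgf_def
  by (rule integral_subset_le)
    (auto intro: tilted_integrable_Icc tilted_integrable_Ici tilted_nonneg)

lemma integral_tilted_Icc_le:
  assumes "0 \<le> a" "a \<le> b"
  shows "integral {a..b} (tilted s) \<le> (b - a) * exp (\<bar>s\<bar> * b)"
proof -
  have "tilted s t \<le> exp (\<bar>s\<bar> * b)" if "t \<in> {a..b}" for t
  proof -
    have "s * t \<le> \<bar>s\<bar> * b"
      using that assms by (meson abs_ge_self abs_ge_zero atLeastAtMost_iff mult_mono order_trans)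
    then show ?thesis
      using tilted_le_exp[of t s] that assms by (meson atLeastAtMost_iff exp_le_cancel_iff order_trans)
  qed
  then have "integral {a..b} (tilted s) \<le> integral {a..b} (\<lambda>t. exp (\<bar>s\<bar> * b))"
    by (intro integral_le tilted_integrable_Icc assms(1)) auto
  then show ?thesis
    using assms by simp
qed

lemma integral_tilted_drop_head:
  assumes "0 \<le> s" "0 \<le> d" "d \<le> 1" "d \<le> x"
  shows "integral {0..x} (tilted s) - d * exp s \<le> integral {d..x} (tilted s)"
proof -
  have "integral {0..d} (tilted s) + integral {d..x} (tilted s) = integral {0..x} (tilted s)"
    by (rule Henstock_Kurzweil_Integration.integral_combine) (use assms in \<open>auto intro: tilted_integrable_Icc\<close>)
  moreover have "exp (\<bar>s\<bar> * d) \<le> exp s"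
    using assms by (simp add: mult_left_le)
  then have "(d - 0) * exp (\<bar>s\<bar> * d) \<le> d * exp s"
    using assms by (simp add: mult_left_mono)
  ultimately show ?thesis
    using integral_tilted_Icc_le[of 0 d s] assms by linarith
qed

lemma integral_tilted_Ici_le:
  assumes "0 < c" "0 \<le> w" and le: "\<And>t. w \<le> t \<Longrightarrow> tilted s t \<le> exp (- c * t)"
  shows "integral {w..} (tilted s) \<le> 1 / c"
proof -
  have exp_int: "((\<lambda>t. exp (- c * t)) has_integral exp (- c * w) / c) {w..}"
    by (rule has_integral_exp_minus_to_infinity) (use assms in simp)
  have "integral {w..} (tilted s) \<le> exp (- c * w) / c"
    by (rule has_integral_le[OF integrable_integral[OF tilted_integrable_Ici] exp_int])
      (use assms in auto)
  also have "\<dots> \<le> 1 / c"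
    using assms by (intro divide_right_mono) auto
  finally show ?thesis .
qed

lemma integral_tilted_shift_ge:
  assumes "0 \<le> a" "0 \<le> r"
  shows "exp (r * a) * integral {a..b} (tilted s) \<le> integral {a..b} (tilted (s + r))"
proof -
  have "integral {a..b} (\<lambda>t. exp (r * a) * tilted s t) \<le> integral {a..b} (tilted (s + r))"
  proof (rule integral_le)
    fix t assume "t \<in> {a..b}"
    then show "exp (r * a) * tilted s t \<le> tilted (s + r) t"
      unfolding tilted_add using assms tilted_nonneg[of t s]
      by (intro mult_right_mono) (auto intro: mult_left_mono)
  qed (use assms in \<open>auto intro: integrable_on_mult_right tilted_integrable_Icc\<close>)
  then show ?thesis
    by simp
qed

lemma two_mul_le_integral_tilted:
  assumes "1 \<le> w" "4 * w \<le> exp (s / 2)"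
  shows "2 * w \<le> integral {0..w} (tilted s)"
proof -
  have "1 < exp (s / 2)"
    using assms by linarith
  then have s: "0 \<le> s"
    by simp
  have "integral {1/2..1} (\<lambda>t::real. exp (s / 2)) \<le> integral {1/2..1} (tilted s)"
  proof (rule integral_le)
    fix t :: real assume t: "t \<in> {1/2..1}"
    then have "s / 2 \<le> s * t"
      using s by (auto intro: mult_left_mono[of "1/2" t s, simplified])
    then show "exp (s / 2) \<le> tilted s t"
      using chi_eq_1 t by (simp add: tilted_def)
  qed (auto intro: tilted_integrable_Icc)
  also have "\<dots> \<le> integral {0..w} (tilted s)"
    by (rule integral_subset_le) (use assms in \<open>auto intro: tilted_integrable_Icc tilted_nonneg\<close>)
  finally show ?thesis
    using assms by simp
qed

lemma sum_tilted_grid_le: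
  assumes "0 < \<delta>" "0 < t"
  shows "(\<Sum>j<N. \<delta> * tilted (real (Suc j) * \<delta>) t)
    \<le> tilted (real N * \<delta>) t / t + \<delta> * tilted (real N * \<delta>) t"
proof -
  have "(\<Sum>j<N. \<delta> * tilted (real (Suc j) * \<delta>) t) = chi t * (\<delta> * (\<Sum>j<N. exp (real (Suc j) * \<delta> * t)))"
    by (simp add: tilted_def sum_distrib_left algebra_simps)
  also have "\<dots> \<le> chi t * (exp (real N * \<delta> * t) * (1 / t + \<delta>))"
    using assms chi_nonneg[of t] by (intro mult_left_mono sum_exp_grid_le) auto
  also have "\<dots> = tilted (real N * \<delta>) t / t + \<delta> * tilted (real N * \<delta>) t"
    by (simp add: tilted_def algebra_simps)
  finally show ?thesis .
qed

lemma sum_mgf_grid_le: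
  fixes N :: nat
  assumes \<delta>: "0 < \<delta>"
  defines "s \<equiv> real N * \<delta>"
  shows "(\<Sum>j<N. \<delta> * mgf (real (Suc j) * \<delta>))
    \<le> s * exp s + integral {1..} (\<lambda>t. tilted s t / t) + \<delta> * mgf1 s"
proof -
  have "(\<Sum>j<N. \<delta> * integral {0..1} (tilted (real (Suc j) * \<delta>))) \<le> (\<Sum>j<N. \<delta> * exp s)"
  proof (rule sum_mono)
    fix j assume "j \<in> {..<N}"
    then have "integral {0..1} (tilted (real (Suc j) * \<delta>)) \<le> exp s"
      using integral_tilted_Icc_le[of 0 1 "real (Suc j) * \<delta>"] \<delta>
      by (simp add: s_def abs_mult order_trans[OF _ exp_mono])
    then show "\<delta> * integral {0..1} (tilted (real (Suc j) * \<delta>)) \<le> \<delta> * exp s"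
      using \<delta> by simp
  qed
  also have "\<dots> = s * exp s"
    by (simp add: s_def)
  finally have head: "(\<Sum>j<N. \<delta> * integral {0..1} (tilted (real (Suc j) * \<delta>))) \<le> s * exp s" .
  have "(\<Sum>j<N. \<delta> * mgf1 (real (Suc j) * \<delta>)) = integral {1..} (\<lambda>t. \<Sum>j<N. \<delta> * tilted (real (Suc j) * \<delta>) t)"
    unfolding mgf1_def by (subst integral_sum) (auto intro!: integrable_on_mult_right tilted_integrable_Ici)
  also have "\<dots> \<le> integral {1..} (\<lambda>t. tilted s t / t + \<delta> * tilted s t)"
    unfolding s_def using \<delta>
    by (intro integral_le integrable_sum integrable_add integrable_on_mult_right tilted_integrable_Ici
        tilted_div_integrable sum_tilted_grid_le) auto
  also have "\<dots> = integral {1..} (\<lambda>t. tilted s t / t) + \<delta> * mgf1 s"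
    unfolding mgf1_def
    by (subst integral_add) (auto intro!: integrable_on_mult_right tilted_integrable_Ici tilted_div_integrable)
  finally have tail: "(\<Sum>j<N. \<delta> * mgf1 (real (Suc j) * \<delta>)) \<le> integral {1..} (\<lambda>t. tilted s t / t) + \<delta> * mgf1 s" .
  show ?thesis
    using head tail by (simp add: mgf_split distrib_left sum.distrib)
qed

end

locale kernel_xi = kernel +
  fixes \<xi> :: "real \<Rightarrow> real"
  assumes xi_has_integral: "\<And>u. 0 < u \<Longrightarrow> ((\<lambda>v. chi v * exp (\<xi> u * v)) has_integral u) {1..}"
    and xi_smallo: "\<xi> \<in> o(\<lambda>u. ln u)"
begin

lemma mgf1_xi: "0 < u \<Longrightarrow> mgf1 (\<xi> u) = u"
  unfolding mgf1_def tilted_def[abs_def] using xi_has_integral by (simp add: integral_unique)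

lemma xi_tendsto_at_top: "filterlim \<xi> at_top at_top"
  unfolding filterlim_at_top
proof
  fix K
  show "\<forall>\<^sub>F u in at_top. K \<le> \<xi> u"
  proof (rule eventually_mono[OF eventually_gt_at_top[of "max 0 (mgf1 K)"]])
    fix u assume u: "max 0 (mgf1 K) < u"
    show "K \<le> \<xi> u"
    proof (rule ccontr)
      assume "\<not> K \<le> \<xi> u"
      then have "mgf1 (\<xi> u) \<le> mgf1 K"
        by (intro mgf1_mono) simp
      then show False
        using mgf1_xi[of u] u by simp
    qed
  qed
qed

lemma eventually_xi_nonneg: "\<forall>\<^sub>F u in at_top. 0 \<le> \<xi> u"
  using xi_tendsto_at_top unfolding filterlim_at_top by blast

lemma eventually_two_mul_le_integral_tilted_bounded:
  assumes "0 \<le> \<epsilon>"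
  shows "\<forall>\<^sub>F u in at_top. \<forall>w. 1 \<le> w \<and> w \<le> W \<longrightarrow> 2 * w \<le> integral {0..w} (tilted (\<xi> u + \<epsilon>))"
proof -
  have "\<forall>\<^sub>F u in at_top. 2 * ln (4 * max 1 W) \<le> \<xi> u"
    using xi_tendsto_at_top unfolding filterlim_at_top by blast
  then show ?thesis
  proof eventually_elim
    case (elim u)
    then have "ln (4 * max 1 W) \<le> (\<xi> u + \<epsilon>) / 2"
      using assms by simp
    then have "exp (ln (4 * max 1 W)) \<le> exp ((\<xi> u + \<epsilon>) / 2)"
      by (simp only: exp_le_cancel_iff)
    then have "4 * max 1 W \<le> exp ((\<xi> u + \<epsilon>) / 2)"
      by simp
    then show ?case
      by (auto intro: two_mul_le_integral_tilted)
  qed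
qed

lemma mgf_xi_le: "0 < u \<Longrightarrow> mgf (\<xi> u) \<le> exp \<bar>\<xi> u\<bar> + u"
  using integral_tilted_Icc_le[of 0 1 "\<xi> u"] by (simp add: mgf_split mgf1_xi)

lemma integral_tilted_xi_div_le:
  assumes u: "0 < u" and V: "1 \<le> V"
  shows "integral {1..} (\<lambda>t. tilted (\<xi> u) t / t) \<le> V * exp (\<bar>\<xi> u\<bar> * V) + u / V"
proof -
  have "integral {1..V} (\<lambda>t. tilted (\<xi> u) t / t) \<le> integral {1..V} (tilted (\<xi> u))"
  proof (rule integral_le)
    fix t assume "t \<in> {1..V}"
    then show "tilted (\<xi> u) t / t \<le> tilted (\<xi> u) t"
      using tilted_nonneg[of t "\<xi> u"] by (simp add: divide_le_eq mult_le_cancel_left1)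
  qed (auto intro: tilted_div_integrable tilted_integrable_Icc)
  also have "\<dots> \<le> (V - 1) * exp (\<bar>\<xi> u\<bar> * V)"
    using V by (rule integral_tilted_Icc_le[of 1, simplified])
  also have "\<dots> \<le> V * exp (\<bar>\<xi> u\<bar> * V)"
    by (simp add: algebra_simps)
  finally have head: "integral {1..V} (\<lambda>t. tilted (\<xi> u) t / t) \<le> V * exp (\<bar>\<xi> u\<bar> * V)" .
  have "integral {V..} (\<lambda>t. tilted (\<xi> u) t / t) \<le> integral {V..} (\<lambda>t. tilted (\<xi> u) t / V)"
  proof (rule integral_le)
    fix t assume "t \<in> {V..}"
    then show "tilted (\<xi> u) t / t \<le> tilted (\<xi> u) t / V"
      using tilted_nonneg[of t "\<xi> u"] V by (intro divide_left_mono) auto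
  qed (use V in \<open>auto intro: tilted_div_integrable tilted_integrable_Ici\<close>)
  also have "\<dots> = integral {V..} (tilted (\<xi> u)) / V"
    by simp
  also have "\<dots> \<le> mgf1 (\<xi> u) / V"
    unfolding mgf1_def using V
    by (intro divide_right_mono integral_subset_le) (auto intro: tilted_integrable_Ici tilted_nonneg)
  finally have tail: "integral {V..} (\<lambda>t. tilted (\<xi> u) t / t) \<le> u / V"
    by (simp add: mgf1_xi[OF u])
  have "integral {1..} (\<lambda>t. tilted (\<xi> u) t / t)
      = integral {1..V} (\<lambda>t. tilted (\<xi> u) t / t) + integral {V..} (\<lambda>t. tilted (\<xi> u) t / t)"
    by (rule integral_unique[OF has_integral_combine_Icc_Ici]) (use V in \<open>auto intro: tilted_div_integrable\<close>)
  with head tail show ?thesis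
    by linarith
qed

lemma integral_tilted_xi_div_smallo:
  "(\<lambda>u. integral {1..} (\<lambda>t. tilted (\<xi> u) t / t)) \<in> o(\<lambda>u. u)"
proof (rule landau_o.smallI)
  fix c :: real assume c: "0 < c"
  define V where "V = max 1 (2 / c)"
  have V: "1 \<le> V" "2 / c \<le> V"
    by (auto simp: V_def)
  have uV: "u / V \<le> c / 2 * u" if "0 \<le> u" for u
  proof -
    have "u / V \<le> u / (2 / c)"
      using that c V by (intro divide_left_mono) auto
    then show ?thesis
      by (simp add: mult.commute)
  qed
  have "\<forall>\<^sub>F u in at_top. exp (\<bar>\<xi> u\<bar> * V) \<le> sqrt u"
    using smallo_ln_imp_exp_le_sqrt[OF xi_smallo] V by simp
  moreover have "\<forall>\<^sub>F u in at_top. V * sqrt u \<le> c / 2 * u"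
    using c V by real_asymp
  ultimately show "\<forall>\<^sub>F u in at_top. norm (integral {1..} (\<lambda>t. tilted (\<xi> u) t / t)) \<le> c * norm u"
    using eventually_gt_at_top[of 0]
  proof eventually_elim
    case (elim u)
    have nonneg: "0 \<le> integral {1..} (\<lambda>t. tilted (\<xi> u) t / t)"
      by (rule integral_nonneg) (auto intro!: tilted_div_integrable divide_nonneg_nonneg tilted_nonneg)
    have "integral {1..} (\<lambda>t. tilted (\<xi> u) t / t) \<le> V * exp (\<bar>\<xi> u\<bar> * V) + u / V"
      using elim V by (intro integral_tilted_xi_div_le) auto
    also have "\<dots> \<le> V * sqrt u + u / V"
      using elim V by (simp add: mult_left_mono)
    also have "\<dots> \<le> c * u"
      using elim uV[of u] by linarith
    finally show ?case
      using nonneg elim by simp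
  qed
qed

lemma integral_tilted_xi_middle_ge:
  assumes u: "0 < u" and A: "1 \<le> A" "A \<le> w"
  shows "u - A * exp (\<bar>\<xi> u\<bar> * A) - integral {w..} (tilted (\<xi> u)) \<le> integral {A..w} (tilted (\<xi> u))"
proof -
  have "u = integral {1..A} (tilted (\<xi> u)) + integral {A..} (tilted (\<xi> u))"
    using mgf1_xi[OF u] unfolding mgf1_def
    by (metis integral_unique has_integral_combine_Icc_Ici A(1) tilted_integrable_Icc tilted_integrable_Ici
        zero_le_one order_trans)
  also have "integral {A..} (tilted (\<xi> u)) = integral {A..w} (tilted (\<xi> u)) + integral {w..} (tilted (\<xi> u))"
    by (rule integral_unique[OF has_integral_combine_Icc_Ici])
      (use A in \<open>auto intro: tilted_integrable_Icc tilted_integrable_Ici\<close>)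
  moreover have "(A - 1) * exp (\<bar>\<xi> u\<bar> * A) \<le> A * exp (\<bar>\<xi> u\<bar> * A)"
    by (simp add: algebra_simps)
  ultimately show ?thesis
    using integral_tilted_Icc_le[of 1 A "\<xi> u"] A by linarith
qed

end

section \<open>The renewal equation\<close>

locale kernel_sigma = kernel +
  fixes \<sigma> :: "real \<Rightarrow> real"
  assumes sigma_eq_1: "\<And>u. 0 \<le> u \<Longrightarrow> u \<le> 1 \<Longrightarrow> \<sigma> u = 1"
    and sigma_has_integral: "\<And>u. 1 < u \<Longrightarrow> ((\<lambda>t. \<sigma> (u - t) * chi t) has_integral u * \<sigma> u) {0..u}"
begin

lemma sigma_integrable_unit:
  assumes "0 \<le> a"
  shows "\<sigma> integrable_on {a..a + 1}"
proof (cases "a = 0")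
  case True
  have "(\<lambda>x::real. 1::real) integrable_on {0..1}"
    by blast
  then show ?thesis
    using True sigma_eq_1 by (auto intro: integrable_eq)
next
  case False
  then have "(\<lambda>t. \<sigma> (a + 1 - t) * chi t) integrable_on {0..a + 1}"
    using sigma_has_integral[of "a + 1"] assms by fastforce
  then have "(\<lambda>t. \<sigma> (a + 1 - t) * chi t) integrable_on {0..1}"
    by (rule integrable_on_subinterval) (use assms in auto)
  then have "(\<lambda>t. \<sigma> (a + 1 - t)) integrable_on {0..1}"
    by (rule integrable_eq) (simp add: chi_eq_1)
  then show ?thesis
    unfolding integrable_reflect_shift_real by simp
qed

lemma sigma_integrable:
  assumes "0 \<le> a"
  shows "\<sigma> integrable_on {a..b}"
proof -
  have int_n: "\<sigma> integrable_on {0..real n}" for n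
  proof (induction n)
    case (Suc n)
    with sigma_integrable_unit[of "real n"] show ?case
      using Henstock_Kurzweil_Integration.integrable_combine[of 0 "real n" "real n + 1" \<sigma>]
      by (simp add: add.commute)
  qed (simp add: integrable_negligible)
  obtain n :: nat where "b \<le> real n"
    using real_arch_simple by blast
  then show ?thesis
    by (intro integrable_on_subinterval[OF int_n[of n]]) (use assms in auto)
qed

lemma integral_sigma_small:
  assumes "0 \<le> a" "0 < \<eta>"
  obtains \<theta> where "0 < \<theta>" "\<And>w. a \<le> w \<Longrightarrow> w \<le> a + \<theta> \<Longrightarrow> \<bar>integral {a..w} \<sigma>\<bar> < \<eta>"
proof -
  have "continuous_on {a..a + 1} (\<lambda>x. integral {a..x} \<sigma>)"
    using sigma_integrable[OF assms(1)] by (rule indefinite_integral_continuous_1)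
  moreover have "a \<in> {a..a + 1}"
    by simp
  ultimately obtain d where d: "0 < d" "\<forall>x\<in>{a..a + 1}. dist x a < d \<longrightarrow>
      dist (integral {a..x} \<sigma>) (integral {a..a} \<sigma>) < \<eta>"
    using assms(2) unfolding continuous_on_iff by blast
  show ?thesis
    by (rule that[of "min (d / 2) 1"]) (use d in \<open>auto simp: dist_real_def\<close>)
qed

lemma integral_renewal_ge_tilted:
  assumes x: "1 < x" and d: "0 \<le> d" "d \<le> x"
    and below: "\<And>y. 0 \<le> y \<Longrightarrow> y < x - d \<Longrightarrow> exp (- s * y) \<le> \<sigma> y"
  shows "exp (- s * x) * integral {d..x} (tilted s) \<le> integral {d..x} (\<lambda>t. \<sigma> (x - t) * chi t)"
proof -
  have "integral {d..x} (\<lambda>t. exp (- s * x) * tilted s t) \<le> integral {d..x} (\<lambda>t. \<sigma> (x - t) * chi t)"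
  proof (rule integral_le_except_point[where c = d])
    show "(\<lambda>t. exp (- s * x) * tilted s t) integrable_on {d..x}"
      using d by (intro integrable_on_mult_right tilted_integrable_Icc)
    show "(\<lambda>t. \<sigma> (x - t) * chi t) integrable_on {d..x}"
      using integrable_on_subinterval[OF has_integral_integrable[OF sigma_has_integral[OF x]]] d
      by simp
    fix t assume t: "t \<in> {d..x}" "t \<noteq> d"
    then have "exp (- s * (x - t)) \<le> \<sigma> (x - t)"
      by (intro below) auto
    moreover have "exp (- s * x) * tilted s t = exp (- s * (x - t)) * chi t"
      by (simp add: tilted_def algebra_simps flip: exp_add)
    ultimately show "exp (- s * x) * tilted s t \<le> \<sigma> (x - t) * chi t"
      using chi_nonneg[of t] t d by (simp add: mult_right_mono)
  qed
  then show ?thesis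
    by simp
qed

lemma sigma_ge_exp_step:
  assumes s: "0 \<le> s" and x: "1 < x" and d: "0 \<le> d" "d \<le> 1" "d * exp s \<le> 1 / 2"
    and below: "\<And>y. 0 \<le> y \<Longrightarrow> y < x - d \<Longrightarrow> exp (- s * y) \<le> \<sigma> y"
    and small: "- integral {x - d..x} \<sigma> \<le> exp (- s * x) / 4"
    and growth: "2 * x \<le> integral {0..x} (tilted s)"
  shows "exp (- s * x) \<le> \<sigma> x"
proof -
  define F where "F t = \<sigma> (x - t) * chi t" for t
  have F: "(F has_integral x * \<sigma> x) {0..x}"
    unfolding F_def using sigma_has_integral x by simp
  have dx: "d \<le> x"
    using d x by simp
  have "integral {0..d} F + integral {d..x} F = x * \<sigma> x"
    using Henstock_Kurzweil_Integration.integral_combine[OF d(1) dx has_integral_integrable[OF F]]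
      integral_unique[OF F] by simp
  moreover have "integral {0..d} F = integral {x - d..x} \<sigma>"
  proof -
    have "integral {0..d} F = integral {0..d} (\<lambda>t. \<sigma> (x - t))"
      by (rule integral_cong) (use d chi_eq_1 in \<open>auto simp: F_def\<close>)
    then show ?thesis
      by (simp add: integral_reflect_shift_real)
  qed
  moreover have "exp (- s * x) * integral {d..x} (tilted s) \<le> integral {d..x} F"
    unfolding F_def using x d dx below by (intro integral_renewal_ge_tilted) auto
  moreover have "2 * x - 1 / 2 \<le> integral {d..x} (tilted s)"
    using integral_tilted_drop_head[OF s d(1,2) dx] d(3) growth by linarith
  then have "exp (- s * x) * (2 * x - 1 / 2) \<le> exp (- s * x) * integral {d..x} (tilted s)"
    by simp
  moreover have "exp (- s * x) \<le> x * exp (- s * x)"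
    using x by simp
  moreover have "exp (- s * x) * (2 * x - 1 / 2) = 2 * (x * exp (- s * x)) - exp (- s * x) / 2"
    by (simp add: algebra_simps)
  ultimately have "x * exp (- s * x) \<le> x * \<sigma> x"
    using small exp_gt_zero[of "- s * x"] by linarith
  then show ?thesis
    using x by simp
qed

text \<open>Argue at a point of the failure set \<open>B\<close> just above its infimum.\<close>

lemma sigma_ge_exp_if_growth:
  assumes s: "0 \<le> s" and growth: "\<And>w. 1 < w \<Longrightarrow> w \<le> u \<Longrightarrow> 2 * w \<le> integral {0..w} (tilted s)"
    and w: "0 \<le> w" "w \<le> u"
  shows "exp (- s * w) \<le> \<sigma> w"
proof (rule ccontr)
  assume "\<not> exp (- s * w) \<le> \<sigma> w"
  define B where "B = {x. 0 \<le> x \<and> x \<le> u \<and> \<sigma> x < exp (- s * x)}"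
  define a where "a = Inf B"
  have wB: "w \<in> B" and bdd: "bdd_below B"
    using \<open>\<not> exp (- s * w) \<le> \<sigma> w\<close> w by (auto simp: B_def intro: bdd_belowI[of B 0])
  have B_gt_1: "1 < x" if "x \<in> B" for x
    using that s sigma_eq_1[of x] by (cases "x \<le> 1") (auto simp: B_def mult_less_0_iff)
  have a: "1 \<le> a"
    unfolding a_def using wB B_gt_1 by (intro cInf_greatest) force+
  have below: "exp (- s * y) \<le> \<sigma> y" if "0 \<le> y" "y < a" for y
    using that cInf_lower[OF _ bdd, of y] cInf_lower[OF wB bdd] w by (force simp: a_def B_def)
  obtain \<theta> where \<theta>: "0 < \<theta>" "\<And>w. a \<le> w \<Longrightarrow> w \<le> a + \<theta> \<Longrightarrow> \<bar>integral {a..w} \<sigma>\<bar> < exp (- s * u) / 4"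
    using integral_sigma_small[of a "exp (- s * u) / 4"] a by auto
  have "Inf B < a + min \<theta> (exp (- s) / 2)"
    using \<theta> by (simp add: a_def)
  then obtain x where xB: "x \<in> B" and x_lt: "x < a + min \<theta> (exp (- s) / 2)"
    using cInf_less_iff[OF _ bdd] wB by blast
  have ax: "a \<le> x"
    unfolding a_def using xB bdd by (rule cInf_lower)
  have x: "1 < x" "x \<le> u" "\<sigma> x < exp (- s * x)"
    using xB B_gt_1 by (auto simp: B_def)
  have d: "x - a \<le> \<theta>" "x - a \<le> exp (- s) / 2"
    using x_lt by linarith+
  have "- integral {a..x} \<sigma> < exp (- s * u) / 4"
    using \<theta>(2)[OF ax] d(1) by (simp add: abs_less_iff)
  moreover have "exp (- s * u) \<le> exp (- s * x)"
    using x s by (simp add: mult_left_mono)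
  ultimately have small: "- integral {a..x} \<sigma> \<le> exp (- s * x) / 4"
    by linarith
  have "exp (- s * x) \<le> \<sigma> x"
  proof (rule sigma_ge_exp_step[OF s x(1), of "x - a"])
    show "x - a \<le> 1"
      using d(2) s exp_le_one_iff[of "- s"] by linarith
    show "(x - a) * exp s \<le> 1 / 2"
      using mult_right_mono[OF d(2), of "exp s"] by (simp add: exp_minus)
  qed (use ax below small growth x in auto)
  with x show False
    by simp
qed

lemma sigma_pos:
  assumes "0 \<le> x"
  shows "0 < \<sigma> x"
proof -
  define u where "u = max 1 x"
  define s where "s = 2 * ln (4 * u)"
  have u: "1 \<le> u" "x \<le> u"
    by (auto simp: u_def)
  have exp_s: "exp (s / 2) = 4 * u"
    using u by (simp add: s_def)
  have "exp (- s * x) \<le> \<sigma> x"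
  proof (rule sigma_ge_exp_if_growth[OF _ _ assms u(2)])
    show "0 \<le> s"
      using u by (simp add: s_def)
    show "2 * w \<le> integral {0..w} (tilted s)" if "1 < w" "w \<le> u" for w
      using that exp_s by (intro two_mul_le_integral_tilted) auto
  qed
  then show ?thesis
    by (smt (verit) exp_gt_zero)
qed

lemma sigma_nonneg: "0 \<le> x \<Longrightarrow> 0 \<le> \<sigma> x"
  using sigma_pos less_imp_le by blast

lemma mul_sigma_le_integral:
  assumes x: "1 < x"
  shows "x * \<sigma> x \<le> integral {0..x} \<sigma>"
proof -
  have "x * \<sigma> x = integral {0..x} (\<lambda>t. \<sigma> (x - t) * chi t)"
    using sigma_has_integral[OF x] by (simp add: integral_unique)
  also have "\<dots> \<le> integral {0..x} (\<lambda>t. \<sigma> (x - t))"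
  proof (rule integral_le)
    show "(\<lambda>t. \<sigma> (x - t) * chi t) integrable_on {0..x}"
      using sigma_has_integral[OF x] by blast
    show "(\<lambda>t. \<sigma> (x - t)) integrable_on {0..x}"
      using sigma_integrable[of 0 x] unfolding integrable_reflect_shift_real by simp
    fix t assume "t \<in> {0..x}"
    then show "\<sigma> (x - t) * chi t \<le> \<sigma> (x - t)"
      using sigma_nonneg[of "x - t"] chi_le_1[of t] by (simp add: mult_left_le)
  qed
  also have "\<dots> = integral {0..x} \<sigma>"
    by (simp add: integral_reflect_shift_real)
  finally show ?thesis .
qed

lemma mul_sigma_le_if_bounded:
  assumes y: "1 < y" and bound: "\<And>z. 0 \<le> z \<Longrightarrow> z \<le> y \<Longrightarrow> \<sigma> z \<le> M"
  shows "y * \<sigma> y \<le> 1 + (y - 1) * M"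
proof -
  have "integral {0..1} \<sigma> = 1"
    using integral_cong[of "{0..1}" \<sigma> "\<lambda>_. 1"] sigma_eq_1 by simp
  moreover have "integral {1..y} \<sigma> \<le> (y - 1) * M"
    using integral_le[OF sigma_integrable[of 1 y] integrable_const_ivl, of M] bound y by simp
  moreover have "integral {0..1} \<sigma> + integral {1..y} \<sigma> = integral {0..y} \<sigma>"
    using y by (intro Henstock_Kurzweil_Integration.integral_combine sigma_integrable) auto
  ultimately show ?thesis
    using mul_sigma_le_integral[OF y] by linarith
qed

lemma sigma_bdd_above: "bdd_above (\<sigma> ` {0..U})"
proof (rule bdd_aboveI2)
  fix y assume y: "y \<in> {0..U}"
  show "\<sigma> y \<le> max 1 (integral {0..U} \<sigma>)"
  proof (cases "y \<le> 1")
    case False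
    then have "\<sigma> y \<le> y * \<sigma> y"
      using sigma_nonneg[of y] by (simp add: mult_le_cancel_right1)
    also have "\<dots> \<le> integral {0..y} \<sigma>"
      using False by (intro mul_sigma_le_integral) simp
    also have "\<dots> \<le> integral {0..U} \<sigma>"
      using y by (intro integral_subset_le sigma_integrable) (auto intro: sigma_nonneg)
    finally show ?thesis
      by simp
  qed (use y sigma_eq_1 in auto)
qed

lemma sigma_le_1:
  assumes "0 \<le> x"
  shows "\<sigma> x \<le> 1"
proof -
  define U where "U = max 1 x"
  define M where "M = Sup (\<sigma> ` {0..U})"
  have U: "1 \<le> U" "x \<le> U"
    by (auto simp: U_def)
  have le_M: "\<sigma> y \<le> M" if "y \<in> {0..U}" for y
    unfolding M_def using sigma_bdd_above that by (rule cSUP_upper2) simp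
  have "M \<le> 1"
  proof (rule ccontr)
    assume M: "\<not> M \<le> 1"
    have "\<sigma> y \<le> max 1 (M - (M - 1) / U)" if y: "y \<in> {0..U}" for y
    proof (cases "y \<le> 1")
      case False
      then have "y * \<sigma> y \<le> 1 + (y - 1) * M"
        using y le_M by (intro mul_sigma_le_if_bounded) auto
      then have "\<sigma> y \<le> M - (M - 1) / y"
        using False by (simp add: field_simps)
      also have "\<dots> \<le> M - (M - 1) / U"
        using M y False by (simp add: frac_le)
      finally show ?thesis
        by simp
    qed (use y sigma_eq_1 in auto)
    then have "M \<le> max 1 (M - (M - 1) / U)"
      unfolding M_def using U by (intro cSUP_least) auto
    moreover have "0 < (M - 1) / U"
      using M U by simp
    ultimately show False
      using M by linarith
  qed
  then show ?thesis
    using le_M[of x] assms U by simp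
qed

lemma mul_sigma_exp_le:
  assumes x: "1 < x" and A: "0 \<le> A" and bound: "\<And>y. 0 \<le> y \<Longrightarrow> y \<le> x \<Longrightarrow> \<sigma> y * exp (s' * y) \<le> A"
  shows "x * \<sigma> x * exp (s * x) \<le> A * exp ((s - s') * x) * mgf s'"
proof -
  have lhs: "((\<lambda>t. \<sigma> (x - t) * chi t * exp (s * x)) has_integral x * \<sigma> x * exp (s * x)) {0..x}"
    using has_integral_mult_left[OF sigma_has_integral[OF x]] by simp
  have rhs: "((\<lambda>t. A * exp ((s - s') * x) * tilted s' t)
      has_integral A * exp ((s - s') * x) * integral {0..x} (tilted s')) {0..x}"
    using has_integral_mult_right[OF integrable_integral[OF tilted_integrable_Icc[of 0 s' x]]] by simp
  have "x * \<sigma> x * exp (s * x) \<le> A * exp ((s - s') * x) * integral {0..x} (tilted s')"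
  proof (rule has_integral_le[OF lhs rhs])
    fix t assume t: "t \<in> {0..x}"
    have "\<sigma> (x - t) * chi t * exp (s * x)
        = (\<sigma> (x - t) * exp (s' * (x - t))) * (tilted s' t * exp ((s - s') * x))"
      by (simp add: tilted_def algebra_simps flip: exp_add)
    also have "\<dots> \<le> A * (tilted s' t * exp ((s - s') * x))"
      using bound[of "x - t"] t tilted_nonneg[of t s'] by (intro mult_right_mono) auto
    finally show "\<sigma> (x - t) * chi t * exp (s * x) \<le> A * exp ((s - s') * x) * tilted s' t"
      by (simp add: algebra_simps)
  qed
  also have "\<dots> \<le> A * exp ((s - s') * x) * mgf s'"
    using integral_tilted_le_mgf[of 0 x s'] A by (intro mult_left_mono) auto
  finally show ?thesis .
qed

lemma sigma_exp_le_if_moderate: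
  assumes s: "0 \<le> s'" "s' \<le> s" and R': "0 \<le> R'" "\<And>y. 0 \<le> y \<Longrightarrow> \<sigma> y * exp (s' * y) \<le> R'"
    and z: "1 < z" "z \<le> 2 * mgf s + 1"
  shows "\<sigma> z * exp (s * z) \<le> R' * mgf s' * exp ((s - s') * (2 * mgf s + 1))"
proof -
  have "\<sigma> z * exp (s * z) \<le> z * \<sigma> z * exp (s * z)"
    using mult_right_mono[of 1 z "\<sigma> z * exp (s * z)"] z sigma_nonneg[of z] by (simp add: mult.assoc)
  also have "\<dots> \<le> R' * exp ((s - s') * z) * mgf s'"
    using z R' by (intro mul_sigma_exp_le) auto
  also have "\<dots> \<le> R' * exp ((s - s') * (2 * mgf s + 1)) * mgf s'"
    using z s R' mgf_ge_1[of s'] by (intro mult_right_mono mult_left_mono) (auto intro: mult_left_mono)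
  finally show ?thesis
    by (simp add: algebra_simps)
qed

lemma sigma_exp_le_half_if_large:
  assumes s: "0 \<le> s" and z: "1 < z" "2 * mgf s + 1 < z"
    and M: "\<And>y. 0 \<le> y \<Longrightarrow> y \<le> z \<Longrightarrow> \<sigma> y * exp (s * y) \<le> M"
  shows "\<sigma> z * exp (s * z) \<le> M / 2"
proof -
  have M0: "0 \<le> M"
    using M[of 0] z sigma_eq_1[of 0] by simp
  have "z * (\<sigma> z * exp (s * z)) \<le> M * exp ((s - s) * z) * mgf s"
    using mul_sigma_exp_le[OF z(1) M0 M, of s] by (simp add: mult.assoc)
  also have "\<dots> = M * mgf s"
    by simp
  also have "\<dots> \<le> M * (z / 2)"
    using z M0 by (intro mult_left_mono) auto
  finally show ?thesis
    using z by (simp add: field_simps)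
qed

lemma sigma_exp_le_max:
  assumes s: "0 \<le> s'" "s' \<le> s" and R': "0 \<le> R'" "\<And>y. 0 \<le> y \<Longrightarrow> \<sigma> y * exp (s' * y) \<le> R'"
    and R: "exp s \<le> R" "R' * mgf s' * exp ((s - s') * (2 * mgf s + 1)) \<le> R"
    and z: "0 \<le> z" and M: "\<And>y. 0 \<le> y \<Longrightarrow> y \<le> z \<Longrightarrow> \<sigma> y * exp (s * y) \<le> M"
  shows "\<sigma> z * exp (s * z) \<le> max R (M / 2)"
proof (cases "z \<le> 1")
  case True
  then have "\<sigma> z * exp (s * z) \<le> exp s"
    using z s sigma_eq_1 by (simp add: mult_left_le)
  then show ?thesis
    using R by simp
next
  case False
  then show ?thesis
    using sigma_exp_le_if_moderate[OF s R', of z] sigma_exp_le_half_if_large[of s z M] s R M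
    by (cases "z \<le> 2 * mgf s + 1") auto
qed

lemma sigma_exp_bdd_above:
  assumes "0 \<le> s"
  shows "bdd_above ((\<lambda>z. \<sigma> z * exp (s * z)) ` {0..U})"
proof (rule bdd_aboveI2)
  fix z assume z: "z \<in> {0..U}"
  then have "exp (s * z) \<le> exp (s * U)"
    using assms by (auto intro: mult_left_mono)
  then show "\<sigma> z * exp (s * z) \<le> exp (s * U)"
    using sigma_le_1[of z] sigma_nonneg[of z] z by (auto intro: order_trans[OF mult_left_le_one_le])
qed

lemma sigma_exp_bound_step:
  assumes s: "0 \<le> s'" "s' \<le> s" and R': "0 \<le> R'" "\<And>y. 0 \<le> y \<Longrightarrow> \<sigma> y * exp (s' * y) \<le> R'"
    and R: "exp s \<le> R" "R' * mgf s' * exp ((s - s') * (2 * mgf s + 1)) \<le> R"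
    and y: "0 \<le> y"
  shows "\<sigma> y * exp (s * y) \<le> R"
proof -
  define U where "U = max 1 y"
  define M where "M = (SUP z\<in>{0..U}. \<sigma> z * exp (s * z))"
  have U: "1 \<le> U" "y \<le> U"
    by (auto simp: U_def)
  have le_M: "\<sigma> z * exp (s * z) \<le> M" if "z \<in> {0..U}" for z
    unfolding M_def using sigma_exp_bdd_above[of s U] s that by (intro cSUP_upper2) auto
  have "M \<le> max R (M / 2)"
    unfolding M_def using U
    by (intro cSUP_least) (auto intro!: sigma_exp_le_max[OF s R' R] le_M[unfolded M_def])
  moreover have "1 \<le> M"
    using le_M[of 0] U sigma_eq_1[of 0] by simp
  ultimately have "M \<le> R"
    by (auto simp: max_def split: if_splits)
  then show ?thesis
    using le_M[of y] y U by simp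
qed

text \<open>The exponent accumulated by applying \<open>sigma_exp_bound_step\<close> from \<open>s' = j \<delta>\<close> to
  \<open>s = (j + 1) \<delta>\<close> for \<open>j < n\<close>.\<close>

definition grid_exponent :: "real \<Rightarrow> nat \<Rightarrow> real" where
  "grid_exponent \<delta> n =
    real n * \<delta> + (\<Sum>j<n. ln (mgf (real j * \<delta>)) + \<delta> * (2 * mgf (real (Suc j) * \<delta>) + 1))"

lemma sigma_exp_le_grid:
  assumes \<delta>: "0 < \<delta>" and y: "0 \<le> y"
  shows "\<sigma> y * exp (real n * \<delta> * y) \<le> exp (grid_exponent \<delta> n)"
  using y
proof (induction n arbitrary: y)
  case 0
  then show ?case
    using sigma_le_1 by (simp add: grid_exponent_def)
next
  case (Suc n)
  have mgf_pos: "0 < mgf (real n * \<delta>)"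
    using mgf_ge_1[of "real n * \<delta>"] \<delta> by simp
  have "exp (grid_exponent \<delta> n) * mgf (real n * \<delta>)
      * exp ((real (Suc n) * \<delta> - real n * \<delta>) * (2 * mgf (real (Suc n) * \<delta>) + 1))
      = exp (grid_exponent \<delta> n + ln (mgf (real n * \<delta>)) + \<delta> * (2 * mgf (real (Suc n) * \<delta>) + 1))"
    using mgf_pos by (simp add: exp_add algebra_simps)
  also have "\<dots> \<le> exp (grid_exponent \<delta> (Suc n))"
    using \<delta> by (simp add: grid_exponent_def algebra_simps)
  finally have step: "exp (grid_exponent \<delta> n) * mgf (real n * \<delta>)
      * exp ((real (Suc n) * \<delta> - real n * \<delta>) * (2 * mgf (real (Suc n) * \<delta>) + 1))
      \<le> exp (grid_exponent \<delta> (Suc n))" .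
  have exp_le: "exp (real (Suc n) * \<delta>) \<le> exp (grid_exponent \<delta> (Suc n))"
  proof -
    have "0 \<le> ln (mgf (real j * \<delta>)) + \<delta> * (2 * mgf (real (Suc j) * \<delta>) + 1)" for j
      using mgf_ge_1[of "real j * \<delta>"] mgf_ge_1[of "real (Suc j) * \<delta>"] \<delta> by simp
    then show ?thesis
      unfolding grid_exponent_def by (simp add: sum_nonneg)
  qed
  show ?case
    by (rule sigma_exp_bound_step[OF _ _ _ Suc.IH exp_le step]) (use \<delta> Suc.prems in auto)
qed

end

locale kernel_sigma_xi = kernel_sigma chi \<sigma> + kernel_xi chi \<xi> for chi \<sigma> \<xi>
begin

lemma sum_ln_mgf_grid_le:
  assumes \<delta>: "0 < \<delta>" and u: "0 < u" and N: "real N * \<delta> \<le> \<xi> u"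
  shows "(\<Sum>j<N. ln (mgf (real j * \<delta>))) \<le> real N * ln (exp (\<xi> u) + u)"
proof -
  have xi: "0 \<le> \<xi> u"
    using N \<delta> by (smt (verit) mult_nonneg_nonneg of_nat_0_le_iff)
  have "ln (mgf (real j * \<delta>)) \<le> ln (exp (\<xi> u) + u)" if "j \<in> {..<N}" for j
  proof -
    have "real j * \<delta> \<le> real N * \<delta>"
      using that \<delta> by (intro mult_right_mono) auto
    then have "mgf (real j * \<delta>) \<le> mgf (\<xi> u)"
      using N by (intro mgf_mono) simp
    also have "\<dots> \<le> exp (\<xi> u) + u"
      using mgf_xi_le[OF u] xi by simp
    finally show ?thesis
      using mgf_ge_1[of "real j * \<delta>"] \<delta> by simp
  qed
  then show ?thesis
    using sum_bounded_above[of "{..<N}" "\<lambda>j. ln (mgf (real j * \<delta>))"] by simp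
qed

lemma sum_mgf_grid_xi_le:
  assumes \<delta>: "0 < \<delta>" and u: "0 < u" and N: "real N * \<delta> \<le> \<xi> u"
  shows "(\<Sum>j<N. \<delta> * mgf (real (Suc j) * \<delta>))
    \<le> \<xi> u * exp (\<xi> u) + integral {1..} (\<lambda>t. tilted (\<xi> u) t / t) + \<delta> * u"
proof -
  define s where "s = real N * \<delta>"
  have s: "0 \<le> s" "s \<le> \<xi> u"
    using \<delta> N by (auto simp: s_def)
  have "s * exp s \<le> \<xi> u * exp (\<xi> u)"
    using s by (intro mult_mono) auto
  moreover have "integral {1..} (\<lambda>t. tilted s t / t) \<le> integral {1..} (\<lambda>t. tilted (\<xi> u) t / t)"
    using s by (intro integral_le tilted_div_integrable divide_right_mono tilted_mono) auto
  moreover have "\<delta> * mgf1 s \<le> \<delta> * u"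
    using mgf1_mono[OF s(2)] mgf1_xi[OF u] \<delta> by simp
  ultimately show ?thesis
    using sum_mgf_grid_le[OF \<delta>, of N] by (simp add: s_def)
qed

lemma ln_sigma_plus_xi_le:
  assumes \<delta>: "0 < \<delta>" and u: "0 < u" and xi: "0 \<le> \<xi> u"
  shows "ln (\<sigma> u) + \<xi> u * u \<le> 3 * \<delta> * u + 2 * \<xi> u + \<xi> u / \<delta> * ln (exp (\<xi> u) + u)
    + 2 * (\<xi> u * exp (\<xi> u)) + 2 * integral {1..} (\<lambda>t. tilted (\<xi> u) t / t)"
proof -
  define N where "N = nat \<lfloor>\<xi> u / \<delta>\<rfloor>"
  have floor: "real N = of_int \<lfloor>\<xi> u / \<delta>\<rfloor>"
    using xi \<delta> by (simp add: N_def)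
  have N: "real N \<le> \<xi> u / \<delta>" "\<xi> u / \<delta> - 1 < real N"
    using floor by linarith+
  then have N\<delta>: "real N * \<delta> \<le> \<xi> u" "\<xi> u \<le> real N * \<delta> + \<delta>"
    using \<delta> by (auto simp: field_simps)
  then have "\<xi> u * u \<le> (real N * \<delta> + \<delta>) * u"
    using u by (intro mult_right_mono) auto
  have "ln (\<sigma> u) + real N * \<delta> * u = ln (\<sigma> u * exp (real N * \<delta> * u))"
    using sigma_pos[of u] u by (simp add: ln_mult)
  also have "\<dots> \<le> ln (exp (grid_exponent \<delta> N))"
    using sigma_exp_le_grid[OF \<delta>, of u N] sigma_pos[of u] u by (subst ln_le_cancel_iff) auto
  also have "\<dots> = grid_exponent \<delta> N"
    by simp
  also have "\<dots> = 2 * (real N * \<delta>) + (\<Sum>j<N. ln (mgf (real j * \<delta>)))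
      + 2 * (\<Sum>j<N. \<delta> * mgf (real (Suc j) * \<delta>))"
    by (simp add: grid_exponent_def sum.distrib sum_distrib_left algebra_simps)
  also have "\<dots> \<le> 2 * \<xi> u + real N * ln (exp (\<xi> u) + u)
      + 2 * (\<xi> u * exp (\<xi> u) + integral {1..} (\<lambda>t. tilted (\<xi> u) t / t) + \<delta> * u)"
    using N\<delta>(1) sum_ln_mgf_grid_le[OF \<delta> u N\<delta>(1)] sum_mgf_grid_xi_le[OF \<delta> u N\<delta>(1)]
    by (intro add_mono) auto
  also have "real N * ln (exp (\<xi> u) + u) \<le> \<xi> u / \<delta> * ln (exp (\<xi> u) + u)"
  proof (rule mult_right_mono)
    show "0 \<le> ln (exp (\<xi> u) + u)"
      using xi u one_le_exp_iff[of "\<xi> u"] by (intro ln_ge_zero) linarith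
  qed (use N in simp)
  finally show ?thesis
    using \<open>\<xi> u * u \<le> (real N * \<delta> + \<delta>) * u\<close> by (simp add: algebra_simps)
qed

lemma ln_sigma_plus_xi_le_sqrt:
  assumes \<delta>: "0 < \<delta>" and u: "1 < u" and xi: "0 \<le> \<xi> u" "exp (\<xi> u) \<le> sqrt u"
  shows "ln (\<sigma> u) + \<xi> u * u \<le> 3 * \<delta> * u + (ln u + ln u / (2 * \<delta>) * ln (sqrt u + u) + ln u * sqrt u)
    + 2 * integral {1..} (\<lambda>t. tilted (\<xi> u) t / t)"
proof -
  have "\<xi> u = ln (exp (\<xi> u))"
    by simp
  also have "\<dots> \<le> ln (sqrt u)"
    using xi(2) u by (subst ln_le_cancel_iff) auto
  finally have xi_le: "\<xi> u \<le> ln u / 2"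
    using u by (simp add: ln_sqrt)
  have "ln (exp (\<xi> u) + u) \<le> ln (sqrt u + u)"
    using xi(2) u by (subst ln_le_cancel_iff) (auto intro!: add_pos_pos)
  moreover have "\<xi> u / \<delta> \<le> ln u / (2 * \<delta>)"
    using divide_right_mono[OF xi_le, of \<delta>] \<delta> by simp
  moreover have "0 \<le> ln (exp (\<xi> u) + u)"
    using u exp_gt_zero[of "\<xi> u"] by (intro ln_ge_zero) linarith
  ultimately have "\<xi> u / \<delta> * ln (exp (\<xi> u) + u) \<le> ln u / (2 * \<delta>) * ln (sqrt u + u)"
    using xi u \<delta> by (intro mult_mono) auto
  moreover have "2 * (\<xi> u * exp (\<xi> u)) \<le> ln u * sqrt u"
    using mult_mono[OF xi_le xi(2)] xi u by simp
  ultimately show ?thesis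
    using ln_sigma_plus_xi_le[OF \<delta> _ xi(1)] u xi_le by linarith
qed

lemma eventually_ln_sigma_upper:
  assumes \<epsilon>: "0 < \<epsilon>"
  shows "\<forall>\<^sub>F u in at_top. ln (\<sigma> u) + \<xi> u * u \<le> \<epsilon> * u"
proof -
  define \<delta> where "\<delta> = \<epsilon> / 6"
  have \<delta>: "0 < \<delta>" "3 * \<delta> = \<epsilon> / 2"
    using \<epsilon> by (auto simp: \<delta>_def)
  have "\<forall>\<^sub>F u in at_top. exp (\<bar>\<xi> u\<bar> * 1) \<le> sqrt u"
    by (rule smallo_ln_imp_exp_le_sqrt[OF xi_smallo]) simp
  moreover have "\<forall>\<^sub>F u in at_top. norm (integral {1..} (\<lambda>t. tilted (\<xi> u) t / t)) \<le> \<epsilon> / 8 * norm u"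
    by (rule landau_o.smallD[OF integral_tilted_xi_div_smallo]) (use \<epsilon> in simp)
  moreover have "\<forall>\<^sub>F u in at_top. ln u + ln u / (2 * \<delta>) * ln (sqrt u + u) + ln u * sqrt u \<le> \<epsilon> / 4 * u"
    unfolding \<delta>_def using \<epsilon> by real_asymp
  ultimately show ?thesis
    using eventually_xi_nonneg eventually_gt_at_top[of 1]
  proof eventually_elim
    case (elim u)
    then have "exp (\<xi> u) \<le> sqrt u"
      by simp
    then have "ln (\<sigma> u) + \<xi> u * u \<le> 3 * \<delta> * u
        + (ln u + ln u / (2 * \<delta>) * ln (sqrt u + u) + ln u * sqrt u)
        + 2 * integral {1..} (\<lambda>t. tilted (\<xi> u) t / t)"
      using elim by (intro ln_sigma_plus_xi_le_sqrt[OF \<delta>(1)]) auto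
    moreover have "integral {1..} (\<lambda>t. tilted (\<xi> u) t / t) \<le> \<epsilon> / 8 * u"
      using elim abs_ge_self[of "integral {1..} (\<lambda>t. tilted (\<xi> u) t / t)"] by simp
    moreover have "3 * \<delta> * u = \<epsilon> / 2 * u"
      using \<delta> by simp
    ultimately show ?case
      using elim(3) by linarith
  qed
qed

end

section \<open>Kernels with an almost non-increasing rate\<close>

definition almost_antimono :: "(real \<Rightarrow> real) \<Rightarrow> bool" where
  "almost_antimono \<rho> \<longleftrightarrow> (\<forall>\<eta>>0. \<exists>t0. \<forall>t' t. t0 \<le> t' \<longrightarrow> t' \<le> t \<longrightarrow> \<rho> t \<le> \<rho> t' + \<eta>)"

text \<open>Under (ii) the rate is \<open>\<rho> = ln (1 + e) - ln h\<close>, see \<open>cond_ii_imp_rate\<close>.\<close>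

locale rate_kernel = kernel +
  fixes \<rho> :: "real \<Rightarrow> real"
  assumes chi_eq_exp_rate: "\<forall>\<^sub>F t in at_top. chi t = exp (t * \<rho> t)"
    and rate_almost_antimono: "almost_antimono \<rho>"
begin

lemma rate_window:
  assumes "0 < \<eta>"
  obtains t1 where "0 \<le> t1" "\<And>t. t1 \<le> t \<Longrightarrow> chi t = exp (t * \<rho> t)"
    and "\<And>t' t. t1 \<le> t' \<Longrightarrow> t' \<le> t \<Longrightarrow> \<rho> t \<le> \<rho> t' + \<eta>"
proof -
  obtain t0 where t0: "\<And>t' t. t0 \<le> t' \<Longrightarrow> t' \<le> t \<Longrightarrow> \<rho> t \<le> \<rho> t' + \<eta>"
    using rate_almost_antimono assms unfolding almost_antimono_def by blast
  obtain t2 where t2: "\<And>t. t2 \<le> t \<Longrightarrow> chi t = exp (t * \<rho> t)"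
    using chi_eq_exp_rate unfolding eventually_at_top_linorder by blast
  show ?thesis
    by (rule that[of "max 0 (max t0 t2)"]) (use t0 t2 in auto)
qed

lemma tilted_eq_exp_rate: "chi t = exp (t * \<rho> t) \<Longrightarrow> tilted s t = exp (t * (s + \<rho> t))"
  by (simp add: tilted_def algebra_simps flip: exp_add)

lemma exp_le_integral_tilted_if_rate_high:
  assumes "0 \<le> t1" and rate: "\<And>t. t1 \<le> t \<Longrightarrow> chi t = exp (t * \<rho> t)"
    and "t1 + 1 \<le> w" "0 \<le> c" and high: "\<And>t. w - 1 \<le> t \<Longrightarrow> t \<le> w \<Longrightarrow> c \<le> s + \<rho> t"
  shows "exp (c * (w - 1)) \<le> integral {0..w} (tilted s)"
proof -
  have "integral {w - 1..w} (\<lambda>t. exp (c * (w - 1))) \<le> integral {w - 1..w} (tilted s)"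
  proof (rule integral_le)
    fix t assume t: "t \<in> {w - 1..w}"
    have "c * (w - 1) \<le> t * c"
      using t assms by (simp add: mult.commute mult_left_mono)
    also have "\<dots> \<le> t * (s + \<rho> t)"
      using t assms by (intro mult_left_mono) auto
    finally show "exp (c * (w - 1)) \<le> tilted s t"
      using t assms by (simp add: tilted_eq_exp_rate)
  qed (use assms in \<open>auto intro: tilted_integrable_Icc\<close>)
  also have "\<dots> \<le> integral {0..w} (tilted s)"
    by (rule integral_subset_le) (use assms in \<open>auto intro: tilted_integrable_Icc tilted_nonneg\<close>)
  finally show ?thesis
    by simp
qed

lemma integral_tilted_tail_le_if_rate_low:
  assumes "0 \<le> t1" and rate: "\<And>t. t1 \<le> t \<Longrightarrow> chi t = exp (t * \<rho> t)"
    and antimono: "\<And>t' t. t1 \<le> t' \<Longrightarrow> t' \<le> t \<Longrightarrow> \<rho> t \<le> \<rho> t' + \<eta>"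
    and "t1 \<le> t'" "t' \<le> w" "0 < c" and low: "s + \<rho> t' + \<eta> \<le> - c"
  shows "integral {w..} (tilted s) \<le> 1 / c"
proof (rule integral_tilted_Ici_le)
  fix t assume "w \<le> t"
  then have "\<rho> t \<le> \<rho> t' + \<eta>"
    using assms by (intro antimono) auto
  with low have "s + \<rho> t \<le> - c"
    by linarith
  then have "t * (s + \<rho> t) \<le> t * (- c)"
    by (rule mult_left_mono) (use \<open>w \<le> t\<close> assms in auto)
  then show "tilted s t \<le> exp (- c * t)"
    using \<open>w \<le> t\<close> assms by (simp add: tilted_eq_exp_rate mult.commute)
qed (use assms in auto)

end

locale regular_kernel_sigma_xi = kernel_sigma_xi chi \<sigma> \<xi> + rate_kernel chi \<rho> for chi \<sigma> \<xi> \<rho>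
begin

lemma two_mul_le_integral_tilted_xi:
  assumes \<epsilon>: "0 < \<epsilon>"
    and t1: "0 \<le> t1" "\<And>t. t1 \<le> t \<Longrightarrow> chi t = exp (t * \<rho> t)"
      "\<And>t' t. t1 \<le> t' \<Longrightarrow> t' \<le> t \<Longrightarrow> \<rho> t \<le> \<rho> t' + \<epsilon> / 4"
    and A: "1 \<le> A" "4 \<le> exp (\<epsilon> * A)"
    and u: "0 < u" "exp (\<bar>\<xi> u\<bar> * A) \<le> sqrt u" "2 * A * sqrt u + 4 / \<epsilon> \<le> u"
    and w: "A \<le> w" "t1 + 1 \<le> w" "w \<le> u" "2 * w \<le> exp (\<epsilon> / 4 * (w - 1))"
  shows "2 * w \<le> integral {0..w} (tilted (\<xi> u + \<epsilon>))"
proof (cases "\<forall>t. w - 1 \<le> t \<longrightarrow> t \<le> w \<longrightarrow> \<epsilon> / 4 \<le> \<xi> u + \<epsilon> + \<rho> t")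
  case True
  then have "exp (\<epsilon> / 4 * (w - 1)) \<le> integral {0..w} (tilted (\<xi> u + \<epsilon>))"
    using \<epsilon> by (intro exp_le_integral_tilted_if_rate_high[OF t1(1,2) w(2)]) auto
  with w show ?thesis
    by linarith
next
  case False
  then obtain t' where t': "w - 1 \<le> t'" "t' \<le> w" "\<xi> u + \<epsilon> + \<rho> t' < \<epsilon> / 4"
    by auto
  have "integral {w..} (tilted (\<xi> u)) \<le> 1 / (\<epsilon> / 2)"
    by (rule integral_tilted_tail_le_if_rate_low[OF t1, of t' w]) (use t' w \<epsilon> in auto)
  moreover have "A * exp (\<bar>\<xi> u\<bar> * A) \<le> A * sqrt u"
    using u A by (intro mult_left_mono) auto
  ultimately have mid: "u - A * sqrt u - 2 / \<epsilon> \<le> integral {A..w} (tilted (\<xi> u))"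
    using integral_tilted_xi_middle_ge[OF u(1) A(1) w(1)] by simp
  have "0 \<le> integral {A..w} (tilted (\<xi> u))"
    using A by (intro integral_nonneg tilted_integrable_Icc tilted_nonneg) auto
  then have "4 * integral {A..w} (tilted (\<xi> u)) \<le> exp (\<epsilon> * A) * integral {A..w} (tilted (\<xi> u))"
    using A by (intro mult_right_mono) auto
  also have "\<dots> \<le> integral {A..w} (tilted (\<xi> u + \<epsilon>))"
    using A \<epsilon> by (intro integral_tilted_shift_ge) auto
  also have "\<dots> \<le> integral {0..w} (tilted (\<xi> u + \<epsilon>))"
    using A by (intro integral_subset_le tilted_integrable_Icc) (auto intro: tilted_nonneg)
  finally show ?thesis
    using mid u(3) w(3) by linarith
qed

lemma eventually_two_mul_le_integral_tilted:
  assumes \<epsilon>: "0 < \<epsilon>"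
  shows "\<forall>\<^sub>F u in at_top. \<forall>w. 1 < w \<and> w \<le> u \<longrightarrow> 2 * w \<le> integral {0..w} (tilted (\<xi> u + \<epsilon>))"
proof -
  obtain t1 where t1: "0 \<le> t1" "\<And>t. t1 \<le> t \<Longrightarrow> chi t = exp (t * \<rho> t)"
    "\<And>t' t. t1 \<le> t' \<Longrightarrow> t' \<le> t \<Longrightarrow> \<rho> t \<le> \<rho> t' + \<epsilon> / 4"
    using rate_window[of "\<epsilon> / 4"] \<epsilon> by auto
  define A where "A = max 1 (3 / \<epsilon>)"
  have A: "1 \<le> A" "4 \<le> exp (\<epsilon> * A)"
  proof -
    have "\<epsilon> * (3 / \<epsilon>) \<le> \<epsilon> * A"
      using \<epsilon> by (intro mult_left_mono) (auto simp: A_def)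
    then have "3 \<le> \<epsilon> * A"
      using \<epsilon> by simp
    then show "4 \<le> exp (\<epsilon> * A)"
      using exp_ge_add_one_self[of 3] by (smt (verit) exp_le_cancel_iff)
  qed (simp add: A_def)
  have "\<forall>\<^sub>F w in at_top. 2 * w \<le> exp (\<epsilon> / 4 * (w - 1))"
    using \<epsilon> by real_asymp
  then obtain W where W: "\<And>w. W \<le> w \<Longrightarrow> 2 * w \<le> exp (\<epsilon> / 4 * (w - 1))"
    unfolding eventually_at_top_linorder by blast
  define W0 where "W0 = max W (max A (t1 + 1))"
  have "\<forall>\<^sub>F u in at_top. exp (\<bar>\<xi> u\<bar> * A) \<le> sqrt u"
    using smallo_ln_imp_exp_le_sqrt[OF xi_smallo] A by simp
  moreover have "\<forall>\<^sub>F u in at_top. 2 * A * sqrt u + 4 / \<epsilon> \<le> u"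
    using \<epsilon> A by real_asymp
  ultimately show ?thesis
    using eventually_two_mul_le_integral_tilted_bounded[OF less_imp_le[OF \<epsilon>], of W0]
      eventually_gt_at_top[of 0]
  proof eventually_elim
    case (elim u)
    show ?case
    proof (intro allI impI)
      fix w assume w: "1 < w \<and> w \<le> u"
      show "2 * w \<le> integral {0..w} (tilted (\<xi> u + \<epsilon>))"
      proof (cases "w \<le> W0")
        case False
        then show ?thesis
          using two_mul_le_integral_tilted_xi[OF \<epsilon> t1 A, of u w] elim w W[of w] by (auto simp: W0_def)
      qed (use elim w in auto)
    qed
  qed
qed

lemma eventually_ln_sigma_lower:
  assumes \<epsilon>: "0 < \<epsilon>"
  shows "\<forall>\<^sub>F u in at_top. - \<epsilon> * u \<le> ln (\<sigma> u) + \<xi> u * u"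
  using eventually_two_mul_le_integral_tilted[OF \<epsilon>] eventually_xi_nonneg eventually_gt_at_top[of 0]
proof eventually_elim
  case (elim u)
  then have "exp (- (\<xi> u + \<epsilon>) * u) \<le> \<sigma> u"
    using \<epsilon> by (intro sigma_ge_exp_if_growth[of _ u]) auto
  then have "- (\<xi> u + \<epsilon>) * u \<le> ln (\<sigma> u)"
    using sigma_pos[of u] elim by (simp add: ln_ge_iff)
  then show ?case
    by (simp add: algebra_simps)
qed

lemma sigma_asymptotics: "\<exists>e. (e \<longlongrightarrow> 0) at_top \<and> (\<forall>\<^sub>F u in at_top. \<sigma> u = exp ((- \<xi> u + e u) * u))"
proof -
  define e where "e u = ln (\<sigma> u) / u + \<xi> u" for u
  have "(e \<longlongrightarrow> 0) at_top"
  proof (rule tendstoI)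
    fix \<epsilon> :: real assume \<epsilon>: "0 < \<epsilon>"
    show "\<forall>\<^sub>F u in at_top. dist (e u) 0 < \<epsilon>"
      using eventually_ln_sigma_lower[OF half_gt_zero[OF \<epsilon>]] eventually_ln_sigma_upper[OF half_gt_zero[OF \<epsilon>]]
        eventually_gt_at_top[of 0]
    proof eventually_elim
      case (elim u)
      then have "\<bar>ln (\<sigma> u) + \<xi> u * u\<bar> \<le> \<epsilon> / 2 * u"
        by (intro abs_leI) linarith+
      then have "\<bar>e u\<bar> \<le> \<epsilon> / 2"
        using elim by (simp add: e_def field_simps abs_divide)
      then show ?case
        using \<epsilon> by simp
    qed
  qed
  moreover have "\<forall>\<^sub>F u in at_top. \<sigma> u = exp ((- \<xi> u + e u) * u)"
    using eventually_gt_at_top[of 0]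
  proof eventually_elim
    case (elim u)
    then have "(- \<xi> u + e u) * u = ln (\<sigma> u)"
      by (simp add: e_def field_simps)
    then show ?case
      using sigma_pos[of u] elim by simp
  qed
  ultimately show ?thesis
    by blast
qed

end

section \<open>The hypotheses (i) and (ii)\<close>

lemma almost_antimono_diff_ln:
  fixes f h :: "real \<Rightarrow> real"
  assumes h_mono: "mono_on {0..} h" and h_pos: "\<forall>\<^sub>F t in at_top. 0 < h t"
    and f_lim: "(f \<longlongrightarrow> 0) at_top"
  shows "almost_antimono (\<lambda>t. f t - ln (h t))"
  unfolding almost_antimono_def
proof (intro allI impI)
  fix \<eta> :: real assume "0 < \<eta>"
  have "\<forall>\<^sub>F t in at_top. \<bar>f t\<bar> < \<eta> / 2 \<and> 0 < h t \<and> 0 \<le> t"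
    using tendstoD[OF f_lim half_gt_zero[OF \<open>0 < \<eta>\<close>]] h_pos eventually_ge_at_top[of 0]
    by eventually_elim (simp add: dist_real_def)
  then obtain t0 where t0: "\<And>t. t0 \<le> t \<Longrightarrow> \<bar>f t\<bar> < \<eta> / 2 \<and> 0 < h t \<and> 0 \<le> t"
    unfolding eventually_at_top_linorder by blast
  have "f t - ln (h t) \<le> f t' - ln (h t') + \<eta>" if "t0 \<le> t'" "t' \<le> t" for t' t
  proof -
    have "ln (h t') \<le> ln (h t)"
      using t0[of t'] t0[of t] that mono_onD[OF h_mono, of t' t] by simp
    then show ?thesis
      using t0[of t'] t0[of t] that by linarith
  qed
  then show "\<exists>t0. \<forall>t' t. t0 \<le> t' \<longrightarrow> t' \<le> t \<longrightarrow> f t - ln (h t) \<le> f t' - ln (h t') + \<eta>"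
    by blast
qed

lemma cond_ii_imp_rate:
  fixes chi :: "real \<Rightarrow> real"
  assumes "cond_ii chi"
  obtains \<rho> where "\<forall>\<^sub>F t in at_top. chi t = exp (t * \<rho> t)"
    and "filterlim \<rho> at_bot at_top" and "almost_antimono \<rho>"
proof -
  obtain h e :: "real \<Rightarrow> real" where h_mono: "mono_on {0..} h" and h_lim: "filterlim h at_top at_top"
    and e_lim: "(e \<longlongrightarrow> 0) at_top" and chi_eq: "\<forall>\<^sub>F t in at_top. chi t = ((1 + e t) / h t) powr t"
    using assms unfolding cond_ii_def by blast
  define \<rho> where "\<rho> t = ln (1 + e t) - ln (h t)" for t
  have ln_e_lim: "((\<lambda>t. ln (1 + e t)) \<longlongrightarrow> 0) at_top"
    using tendsto_ln[OF tendsto_add[OF tendsto_const e_lim, of 1]] by simp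
  have h_pos: "\<forall>\<^sub>F t in at_top. 0 < h t"
    using h_lim by (simp add: filterlim_at_top_dense)
  have e_pos: "\<forall>\<^sub>F t in at_top. 0 < 1 + e t"
    using tendstoD[OF e_lim zero_less_one] by eventually_elim (simp add: dist_real_def)
  have "\<forall>\<^sub>F t in at_top. chi t = exp (t * \<rho> t)"
    using chi_eq h_pos e_pos by eventually_elim (simp add: \<rho>_def powr_def ln_div mult.commute)
  moreover have "filterlim (\<lambda>t. - ln (h t)) at_bot at_top"
    using filterlim_compose[OF ln_at_top h_lim] by (simp add: filterlim_uminus_at_top)
  then have "filterlim \<rho> at_bot at_top"
    unfolding \<rho>_def diff_conv_add_uminus by (rule filterlim_tendsto_add_at_bot_iff[OF ln_e_lim, THEN iffD2])
  moreover have "almost_antimono \<rho>"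
    unfolding \<rho>_def using h_mono h_pos ln_e_lim by (rule almost_antimono_diff_ln)
  ultimately show ?thesis
    using that by blast
qed

lemma superexp_decay_if_rate:
  fixes chi \<rho> :: "real \<Rightarrow> real"
  assumes "\<forall>\<^sub>F t in at_top. chi t = exp (t * \<rho> t)" "filterlim \<rho> at_bot at_top"
  shows "\<forall>\<^sub>F t in at_top. chi t \<le> exp (- K * t)"
proof -
  have "\<forall>\<^sub>F t in at_top. \<rho> t \<le> - K"
    using assms(2) unfolding filterlim_at_bot by blast
  with assms(1) eventually_ge_at_top[of 0] show ?thesis
  proof eventually_elim
    case (elim t)
    then have "t * \<rho> t \<le> t * (- K)"
      by (intro mult_left_mono) auto
    then show ?case
      using elim by (simp add: mult.commute)
  qed
qed

lemma tail_nn_eq_0_imp_AE_eq_0: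
  fixes chi :: "real \<Rightarrow> real"
  assumes meas: "set_borel_measurable lborel {0..} chi" and T: "0 \<le> T"
    and nonneg: "\<And>t. T \<le> t \<Longrightarrow> 0 \<le> chi t" and tail: "tail_nn chi T = 0"
  shows "AE s in lborel. T \<le> s \<longrightarrow> chi s = 0"
proof -
  have [measurable]: "(\<lambda>s. indicator {0..} s *\<^sub>R chi s) \<in> borel_measurable borel"
    using meas unfolding set_borel_measurable_def by simp
  define f where "f s = ennreal (indicator {0..} s *\<^sub>R chi s) * indicator {T..} s" for s
  have f_meas: "f \<in> borel_measurable lborel"
    unfolding f_def by measurable
  have "tail_nn chi T = integral\<^sup>N lborel f"
    unfolding tail_nn_def f_def by (rule nn_integral_cong) (use T in \<open>auto simp: indicator_def\<close>)
  then have "AE s in lborel. f s = 0"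
    using tail nn_integral_0_iff_AE[OF f_meas] by simp
  then show ?thesis
  proof (rule eventually_mono)
    fix s assume "f s = 0"
    then show "T \<le> s \<longrightarrow> chi s = 0"
      using nonneg[of s] T by (auto simp: f_def indicator_def)
  qed
qed

lemma has_integral_le_if_AE_eq_0:
  fixes chi :: "real \<Rightarrow> real"
  assumes AE: "AE s in lborel. T \<le> s \<longrightarrow> chi s = 0" and T: "1 \<le> T"
    and bounds: "\<And>t. 1 \<le> t \<Longrightarrow> t \<le> T \<Longrightarrow> 0 \<le> chi t \<and> chi t \<le> 1"
    and int: "((\<lambda>v. chi v * exp (s * v)) has_integral I) {1..}"
  shows "I \<le> (T - 1) * exp (\<bar>s\<bar> * T)"
proof -
  obtain N where N: "{x \<in> space lborel. \<not> (T \<le> x \<longrightarrow> chi x = 0)} \<subseteq> N"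
    "emeasure lborel N = 0" "N \<in> sets lborel"
    using AE by (rule AE_E)
  then have "negligible N"
    unfolding negligible_iff_null_sets by (intro null_sets_completionI null_setsI) auto
  then have "((\<lambda>v. if v \<in> {1..T} then chi v * exp (s * v) else 0) has_integral I) {1..}"
  proof (rule has_integral_spike[OF _ _ int])
    fix v assume "v \<in> {1..} - N"
    then show "(if v \<in> {1..T} then chi v * exp (s * v) else 0) = chi v * exp (s * v)"
      using N(1) by (cases "v \<le> T") (auto, metis (mono_tags, lifting) mem_Collect_eq nle_le subsetD)
  qed
  then have "((\<lambda>v. chi v * exp (s * v)) has_integral I) {1..T}"
    by (subst has_integral_restrict[symmetric]) auto
  moreover have "((\<lambda>v. exp (\<bar>s\<bar> * T)) has_integral (T - 1) * exp (\<bar>s\<bar> * T)) {1..T}"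
    using has_integral_const_real[of "exp (\<bar>s\<bar> * T)" 1 T] T by simp
  moreover have "chi v * exp (s * v) \<le> exp (\<bar>s\<bar> * T)" if v: "v \<in> {1..T}" for v
  proof -
    have "s * v \<le> \<bar>s\<bar> * T"
      using v by (meson abs_ge_self abs_ge_zero atLeastAtMost_iff dual_order.trans mult_mono zero_le_one)
    then have "exp (s * v) \<le> exp (\<bar>s\<bar> * T)"
      by simp
    moreover have "0 \<le> chi v" "chi v \<le> 1"
      using bounds[of v] v by auto
    ultimately show ?thesis
      by (meson exp_ge_zero mult_left_le_one_le order.trans)
  qed
  ultimately show ?thesis
    by (rule has_integral_le)
qed

lemma cond_i_imp_not_smallo_ln:
  fixes chi \<xi> :: "real \<Rightarrow> real"
  assumes meas: "set_borel_measurable lborel {0..} chi"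
    and bounds: "\<And>t. 1 \<le> t \<Longrightarrow> 0 \<le> chi t \<and> chi t \<le> 1"
    and xi: "\<And>u. 0 < u \<Longrightarrow> ((\<lambda>v. chi v * exp (\<xi> u * v)) has_integral u) {1..}"
    and "cond_i chi"
  shows "\<xi> \<notin> o(\<lambda>u. ln u)"
proof
  assume smallo: "\<xi> \<in> o(\<lambda>u. ln u)"
  obtain T where T: "1 < T" "tail_nn chi T = 0"
    using \<open>cond_i chi\<close> unfolding cond_i_def by blast
  then have AE: "AE s in lborel. T \<le> s \<longrightarrow> chi s = 0"
    using bounds by (intro tail_nn_eq_0_imp_AE_eq_0[OF meas]) auto
  have "\<forall>\<^sub>F u in at_top. exp (\<bar>\<xi> u\<bar> * T) \<le> sqrt u"
    using smallo_ln_imp_exp_le_sqrt[OF smallo] T by simp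
  moreover have "\<forall>\<^sub>F u in at_top. (T - 1) * sqrt u < u"
    by real_asymp
  ultimately have "\<forall>\<^sub>F u in at_top. u < (u::real)"
    using eventually_gt_at_top[of 0]
  proof eventually_elim
    case (elim u)
    have "u \<le> (T - 1) * exp (\<bar>\<xi> u\<bar> * T)"
      using T bounds by (intro has_integral_le_if_AE_eq_0[OF AE _ _ xi]) (auto simp: elim)
    also have "\<dots> \<le> (T - 1) * sqrt u"
      using elim T by (intro mult_left_mono) auto
    also have "\<dots> < u"
      using elim by simp
    finally show ?case .
  qed
  then show False
    by simp
qed

theorem lemma6p1:
  fixes chi \<xi> \<sigma> :: "real \<Rightarrow> real"
  assumes meas: "set_borel_measurable lborel {0..} chi"
    and chi_one: "\<And>t. 0 \<le> t \<Longrightarrow> t \<le> 1 \<Longrightarrow> chi t = 1"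
    and chi_bnd: "\<And>t. t > 1 \<Longrightarrow> 0 \<le> chi t \<and> chi t \<le> 1"
    and cond: "cond_i chi \<or> cond_ii chi"
    and xi_def: "\<And>u. u > 0 \<Longrightarrow> ((\<lambda>v. chi v * exp (\<xi> u * v)) has_integral u) {1..}"
    and sigma_init: "\<And>u. 0 \<le> u \<Longrightarrow> u \<le> 1 \<Longrightarrow> \<sigma> u = 1"
    and sigma_eq: "\<And>u. u > 1 \<Longrightarrow> ((\<lambda>t. \<sigma> (u - t) * chi t) has_integral (u * \<sigma> u)) {0..u}"
    and xi_small: "\<xi> \<in> o[at_top](\<lambda>u. ln u)"
  shows "(\<lambda>u. integral {1..} (\<lambda>v. chi v * exp (\<xi> u * v) / v)) \<in> o[at_top](\<lambda>u. u)
     \<and> (\<exists>e :: real \<Rightarrow> real. (e \<longlongrightarrow> 0) at_top \<and>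
          (\<forall>\<^sub>F u in at_top. \<sigma> u = exp ((- \<xi> u + e u) * u)))"
proof -
  have chi_bounds: "0 \<le> chi t \<and> chi t \<le> 1" if "1 \<le> t" for t
    using chi_one[of t] chi_bnd[of t] that by fastforce
  have "\<not> cond_i chi"
    using cond_i_imp_not_smallo_ln[OF meas chi_bounds xi_def] xi_small by blast
  with cond obtain \<rho> where rate: "\<forall>\<^sub>F t in at_top. chi t = exp (t * \<rho> t)"
    and "filterlim \<rho> at_bot at_top" "almost_antimono \<rho>"
    using cond_ii_imp_rate by blast
  then interpret regular_kernel_sigma_xi chi \<sigma> \<xi> \<rho>
    using assms superexp_decay_if_rate[OF rate] by unfold_locales auto
  show ?thesis
    using integral_tilted_xi_div_smallo sigma_asymptotics by (simp add: tilted_def)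
qed

end
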